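(* Let $\mathcal{N}$ be any set of arbitrary 2D nodes over an $N\times M$ matrix, and let $B\mapsto S_U(B)$ be any fixed assignment, to each submatrix $B$, of a set $S_U(B)\subseteq\mathcal{N}$ whose union equals $B$. For a submatrix $B$, let the set of nodes visited by the update on $B$ be $S_U(B)\cup\{m\in\mathcal{N}: m\cap n\neq\emptyset \text{ for some } n\in S_U(B),\ \text{and } m\not\subseteq n \text{ for every } n\in S_U(B)\}$. Then there exists a submatrix $B$ for which the update on $B$ visits at least $\frac{NM}{N+M}$ nodes.
   Context: The matrix has coordinate set $G=\{0,\dots,N-1\}\times\{0,\dots,M-1\}$; a submatrix $[x_0,x_1][y_0,y_1]$ is the set of $(x,y)$ with $x_0\le x\le x_1$, $y_0\le y\le y_1$. A set of arbitrary 2D nodes is a family $\mathcal{N}$ of nonempty subsets of $G$ (nodes; they need not be submatrices) such that no two nodes are the same subset and for every coordinate $(x,y)$ the singleton $\{(x,y)\}$ is a node. (In the associated update algorithm, the lazy values of the nodes of $S_U(B)$ are changed and the non-lazy values of the other visited nodes are recomputed.) *)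

theory Defs
  imports Complex_Main
begin

definition grid :: "nat \<Rightarrow> nat \<Rightarrow> (nat \<times> nat) set" where
  "grid N M = {0..<N} \<times> {0..<M}"

definition submatrix :: "nat \<Rightarrow> nat \<Rightarrow> nat \<Rightarrow> nat \<Rightarrow> (nat \<times> nat) set" where
  "submatrix x0 x1 y0 y1 = {(x, y). x0 \<le> x \<and> x \<le> x1 \<and> y0 \<le> y \<and> y \<le> y1}"

definition is_submatrix :: "nat \<Rightarrow> nat \<Rightarrow> (nat \<times> nat) set \<Rightarrow> bool" where
  "is_submatrix N M B \<longleftrightarrow>
     (\<exists>x0 x1 y0 y1. x0 \<le> x1 \<and> x1 < N \<and> y0 \<le> y1 \<and> y1 < M \<and> B = submatrix x0 x1 y0 y1)"

text \<open>A set of arbitrary 2D nodes (distinctness of nodes is automatic for a set of sets).\<close>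
definition node_set :: "nat \<Rightarrow> nat \<Rightarrow> (nat \<times> nat) set set \<Rightarrow> bool" where
  "node_set N M Ns \<longleftrightarrow>
     (\<forall>n\<in>Ns. n \<noteq> {} \<and> n \<subseteq> grid N M) \<and> (\<forall>c\<in>grid N M. {c} \<in> Ns)"

definition visited :: "(nat \<times> nat) set set \<Rightarrow> (nat \<times> nat) set set \<Rightarrow> (nat \<times> nat) set set" where
  "visited Ns S = S \<union> {m \<in> Ns. (\<exists>n\<in>S. m \<inter> n \<noteq> {}) \<and> (\<forall>n\<in>S. \<not> m \<subseteq> n)}"

end

theory Submission
  imports Defs
begin

text \<open>Consider the N full rows and the M full columns. A cell (r, c) is either a singleton
node of the decomposition of its row, and then it is visited by the update on that row, or
the node of the row decomposition containing it also contains a cell outside column c; that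
node then meets the column c without lying inside it, so it is visited by the update on
column c. Distinct cells yield distinct nodes in this way, so the N + M updates visit at
least N M nodes in total, and one of them visits at least N M / (N + M).\<close>

definition matrix_row :: "nat \<Rightarrow> nat \<Rightarrow> (nat \<times> nat) set" where
  "matrix_row M r = submatrix r r 0 (M - 1)"

definition matrix_col :: "nat \<Rightarrow> nat \<Rightarrow> (nat \<times> nat) set" where
  "matrix_col N c = submatrix 0 (N - 1) c c"

lemma mem_matrix_row: "0 < M \<Longrightarrow> (x, y) \<in> matrix_row M r \<longleftrightarrow> x = r \<and> y < M"
  unfolding matrix_row_def submatrix_def by auto

lemma mem_matrix_col: "0 < N \<Longrightarrow> (x, y) \<in> matrix_col N c \<longleftrightarrow> x < N \<and> y = c"
  unfolding matrix_col_def submatrix_def by auto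

lemma is_submatrix_matrix_row: "r < N \<Longrightarrow> 0 < M \<Longrightarrow> is_submatrix N M (matrix_row M r)"
  unfolding is_submatrix_def matrix_row_def
  by (intro exI[of _ r] exI[of _ r] exI[of _ 0] exI[of _ "M - 1"]) auto

lemma is_submatrix_matrix_col: "c < M \<Longrightarrow> 0 < N \<Longrightarrow> is_submatrix N M (matrix_col N c)"
  unfolding is_submatrix_def matrix_col_def
  by (intro exI[of _ 0] exI[of _ "N - 1"] exI[of _ c] exI[of _ c]) auto

lemma finite_node_set: "node_set N M Ns \<Longrightarrow> finite Ns"
proof -
  assume "node_set N M Ns"
  then have "Ns \<subseteq> Pow (grid N M)"
    unfolding node_set_def by auto
  moreover have "finite (grid N M)"
    unfolding grid_def by simp
  ultimately show "finite Ns"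
    by (meson finite_Pow_iff finite_subset)
qed

lemma subset_visited: "S \<subseteq> visited Ns S"
  unfolding visited_def by blast

lemma visited_subset: "S \<subseteq> Ns \<Longrightarrow> visited Ns S \<subseteq> Ns"
  unfolding visited_def by blast

lemma in_visited_if_crossing:
  assumes "m \<in> Ns" and "\<Union>S = B" and "m \<inter> B \<noteq> {}" and "\<not> m \<subseteq> B"
  shows "m \<in> visited Ns S"
  using assms unfolding visited_def by blast

lemma card_rows_plus_card_cols_complement:
  "(\<Sum>r<N. card {c. c < M \<and> P r c}) + (\<Sum>c<M. card {r. r < N \<and> \<not> P r c}) = N * M"
proof -
  have "(\<Sum>c<M. card {r. r < N \<and> \<not> P r c}) = (\<Sum>c<M. \<Sum>r<N. of_bool (\<not> P r c))"
    by (simp add: Int_def conj_commute lessThan_def)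
  also have "\<dots> = (\<Sum>r<N. card {c. c < M \<and> \<not> P r c})"
    by (subst sum.swap) (simp add: Int_def conj_commute lessThan_def)
  finally have "(\<Sum>r<N. card {c. c < M \<and> P r c}) + (\<Sum>c<M. card {r. r < N \<and> \<not> P r c})
      = (\<Sum>r<N. card {c. c < M \<and> P r c} + card {c. c < M \<and> \<not> P r c})"
    by (simp add: sum.distrib)
  also have "\<dots> = (\<Sum>r<N. M)"
  proof (rule sum.cong)
    fix r
    have "card {c. c < M \<and> P r c} + card {c. c < M \<and> \<not> P r c}
        = card ({c. c < M \<and> P r c} \<union> {c. c < M \<and> \<not> P r c})"
      by (rule card_Un_disjoint[symmetric]) auto
    also have "{c. c < M \<and> P r c} \<union> {c. c < M \<and> \<not> P r c} = {..<M}"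
      by auto
    finally show "card {c. c < M \<and> P r c} + card {c. c < M \<and> \<not> P r c} = M"
      by simp
  qed simp
  finally show ?thesis
    by simp
qed

lemma exists_ge_average_two_families:
  fixes f g :: "nat \<Rightarrow> real"
  assumes "0 < N + M" and "real N * real M \<le> (\<Sum>r<N. f r) + (\<Sum>c<M. g c)"
  shows "(\<exists>r<N. real N * real M / (real N + real M) \<le> f r)
       \<or> (\<exists>c<M. real N * real M / (real N + real M) \<le> g c)"
proof (rule ccontr)
  define k where "k = real N * real M / (real N + real M)"
  assume "\<not> ?thesis"
  then have f_less: "\<And>r. r < N \<Longrightarrow> f r < k" and g_less: "\<And>c. c < M \<Longrightarrow> g c < k"
    unfolding k_def by (auto simp: not_le)
  have "(\<Sum>r<N. f r) + (\<Sum>c<M. g c) < real N * k + real M * k"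
  proof (cases "N = 0")
    case True
    then show ?thesis
      using assms(1) g_less sum_bounded_above_strict[of "{..<M}" g k] by simp
  next
    case False
    then show ?thesis
      using f_less g_less sum_bounded_above_strict[of "{..<N}" f k]
        sum_bounded_above[of "{..<M}" g k]
      by (simp add: add_less_le_mono less_imp_le)
  qed
  also have "\<dots> = (real N + real M) * k"
    by (simp add: algebra_simps)
  also have "\<dots> = real N * real M"
    using assms(1) unfolding k_def by simp
  finally show False
    using assms(2) by simp
qed

lemma card_non_singleton_rows_le_card_visited_col:
  assumes "0 < N" and "0 < M" and "c < M"
    and SU: "\<And>B. is_submatrix N M B \<Longrightarrow> SU B \<subseteq> Ns \<and> \<Union>(SU B) = B"
    and "finite Ns"
  shows "card {r. r < N \<and> {(r, c)} \<notin> SU (matrix_row M r)}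
       \<le> card (visited Ns (SU (matrix_col N c)))"
proof -
  have row: "SU (matrix_row M r) \<subseteq> Ns" "\<Union>(SU (matrix_row M r)) = matrix_row M r" if "r < N" for r
    using SU is_submatrix_matrix_row[OF that assms(2)] by auto
  have col: "\<Union>(SU (matrix_col N c)) = matrix_col N c"
    using SU is_submatrix_matrix_col[OF assms(3,1)] by auto
  obtain node where node: "node r \<in> SU (matrix_row M r)" "(r, c) \<in> node r" if "r < N" for r
  proof -
    have "\<exists>n. n \<in> SU (matrix_row M r) \<and> (r, c) \<in> n" if "r < N" for r
      using row(2)[OF that] mem_matrix_row[OF assms(2)] assms(3) by blast
    then show thesis
      using that by metis
  qed
  have node_in_row: "node r \<subseteq> matrix_row M r" if "r < N" for r
    using node(1)[OF that] row(2)[OF that] by blast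
  let ?R = "{r. r < N \<and> {(r, c)} \<notin> SU (matrix_row M r)}"
  have "inj_on node ?R"
  proof (rule inj_onI)
    fix r r' assume "r \<in> ?R" "r' \<in> ?R" "node r = node r'"
    then have "(r, c) \<in> matrix_row M r'"
      using node(2) node_in_row by blast
    then show "r = r'"
      using mem_matrix_row[OF assms(2)] by simp
  qed
  moreover have "node ` ?R \<subseteq> visited Ns (SU (matrix_col N c))"
  proof
    fix m assume "m \<in> node ` ?R"
    then obtain r where r: "r < N" "{(r, c)} \<notin> SU (matrix_row M r)" and m: "m = node r"
      by blast
    have "(r, c) \<in> m \<inter> matrix_col N c"
      using m node(2)[OF r(1)] mem_matrix_col[OF assms(1)] r(1) by simp
    moreover have "\<not> m \<subseteq> matrix_col N c"
    proof
      assume "m \<subseteq> matrix_col N c"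
      with m node_in_row[OF r(1)] have "m \<subseteq> {(r, c)}"
        using mem_matrix_row[OF assms(2)] mem_matrix_col[OF assms(1)] by auto
      then show False
        using m node[OF r(1)] r(2) by (metis subset_singletonD empty_iff)
    qed
    ultimately show "m \<in> visited Ns (SU (matrix_col N c))"
      using in_visited_if_crossing[OF _ col] m node(1)[OF r(1)] row(1)[OF r(1)] by blast
  qed
  moreover have "finite (visited Ns (SU (matrix_col N c)))"
    using SU is_submatrix_matrix_col[OF assms(3,1)] visited_subset assms(5) finite_subset by metis
  ultimately show ?thesis
    by (rule card_inj_on_le)
qed

lemma card_visited_rows_plus_cols_ge:
  assumes "0 < N" and "0 < M"
    and SU: "\<And>B. is_submatrix N M B \<Longrightarrow> SU B \<subseteq> Ns \<and> \<Union>(SU B) = B"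
    and "finite Ns"
  shows "N * M \<le> (\<Sum>r<N. card (visited Ns (SU (matrix_row M r))))
                + (\<Sum>c<M. card (visited Ns (SU (matrix_col N c))))"
proof -
  have singletons_le: "card {c. c < M \<and> {(r, c)} \<in> SU (matrix_row M r)}
      \<le> card (visited Ns (SU (matrix_row M r)))" if "r < N" for r
  proof -
    have "SU (matrix_row M r) \<subseteq> Ns"
      using SU is_submatrix_matrix_row[OF that assms(2)] by blast
    then have "finite (visited Ns (SU (matrix_row M r)))"
      using visited_subset assms(4) finite_subset by metis
    moreover have "(\<lambda>c. {(r, c)}) ` {c. c < M \<and> {(r, c)} \<in> SU (matrix_row M r)}
        \<subseteq> visited Ns (SU (matrix_row M r))"
      using subset_visited by blast
    ultimately show ?thesis
      by (intro card_inj_on_le[of "\<lambda>c. {(r, c)}"]) (auto intro: inj_onI)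
  qed
  have "N * M = (\<Sum>r<N. card {c. c < M \<and> {(r, c)} \<in> SU (matrix_row M r)})
              + (\<Sum>c<M. card {r. r < N \<and> {(r, c)} \<notin> SU (matrix_row M r)})"
    by (rule card_rows_plus_card_cols_complement[symmetric])
  also have "\<dots> \<le> (\<Sum>r<N. card (visited Ns (SU (matrix_row M r))))
                + (\<Sum>c<M. card (visited Ns (SU (matrix_col N c))))"
    using singletons_le card_non_singleton_rows_le_card_visited_col[OF assms(1,2) _ SU assms(4)]
    by (intro add_mono sum_mono) auto
  finally show ?thesis .
qed

theorem theorem4:
  fixes N M :: nat
    and Ns :: "(nat \<times> nat) set set"
    and SU :: "(nat \<times> nat) set \<Rightarrow> (nat \<times> nat) set set"
  assumes "0 < N" and "0 < M"
    and "node_set N M Ns"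
    and "\<And>B. is_submatrix N M B \<Longrightarrow> SU B \<subseteq> Ns \<and> \<Union>(SU B) = B"
  shows "\<exists>B. is_submatrix N M B \<and>
           real (card (visited Ns (SU B))) \<ge> real N * real M / (real N + real M)"
proof -
  have "N * M \<le> (\<Sum>r<N. card (visited Ns (SU (matrix_row M r))))
                + (\<Sum>c<M. card (visited Ns (SU (matrix_col N c))))"
    using card_visited_rows_plus_cols_ge[OF assms(1,2,4) finite_node_set[OF assms(3)]] .
  then have sum_ge: "real N * real M \<le> (\<Sum>r<N. real (card (visited Ns (SU (matrix_row M r)))))
                + (\<Sum>c<M. real (card (visited Ns (SU (matrix_col N c)))))"
    unfolding of_nat_sum[symmetric] of_nat_mult[symmetric] of_nat_add[symmetric] of_nat_le_iff .
  consider (row) r where "r < N"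
      "real N * real M / (real N + real M) \<le> real (card (visited Ns (SU (matrix_row M r))))"
    | (col) c where "c < M"
      "real N * real M / (real N + real M) \<le> real (card (visited Ns (SU (matrix_col N c))))"
    using exists_ge_average_two_families[OF _ sum_ge] assms(1) by blast
  then show ?thesis
  proof cases
    case row
    then show ?thesis
      using is_submatrix_matrix_row[OF _ assms(2)] by blast
  next
    case col
    then show ?thesis
      using is_submatrix_matrix_col[OF _ assms(1)] by blast
  qed
qed

end
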